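(* Let $\sigma$ be an involutive non-degenerate quiver-theoretic Yang--Baxter map on a nonempty quiver $\mathscr{A}$ over $\Lambda$, and let $E$ be the closure of (the image of) $\mathscr{A}$ under right-lcms in the structure category $\mathscr{C}(\sigma)$. Suppose there is a finite $n$ with $|\mathscr{A}(\lambda,\Lambda)|\le n$ for all $\lambda\in\Lambda$. Then every element of $E$ has length at most $n$. In particular $E\subsetneq\mathscr{C}(\sigma)$.
   Context: Write $\sigma(x,y)=(x\rightharpoonup y,x\leftharpoonup y)$. A quiver-theoretic Yang--Baxter map is a source/target-preserving map $\sigma$ on composable pairs satisfying the braid relation; involutive: $\sigma^2=\mathrm{id}$; non-degenerate: all $x\rightharpoonup\cdot\colon\mathscr{A}(\mathfrak{t}(x),\Lambda)\to\mathscr{A}(\mathfrak{s}(x),\Lambda)$ and $\cdot\leftharpoonup y\colon\mathscr{A}(\Lambda,\mathfrak{s}(y))\to\mathscr{A}(\Lambda,\mathfrak{t}(y))$ bijective. $\mathscr{A}(\lambda,\Lambda)$ is the set of arrows with source $\lambda$. $\mathscr{C}(\sigma)$ is the category presented by generators $\mathscr{A}$ and the length-preserving relations $x|y\sim(x\rightharpoonup y)|(x\leftharpoonup y)$, so the length of an element (length of any representing path) is well defined. *)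

theory Defs
  imports Main
begin

text \<open>Paths are written left to right: x|y is composable iff tgt x = src y.
  A quiver-theoretic set-theoretic map sigma on composable pairs is a function
  sig :: 'a \<times> 'a \<Rightarrow> 'a \<times> 'a, with (x \<rightharpoonup> y) = fst (sig (x,y)) and
  (x \<leftharpoonup> y) = snd (sig (x,y)).\<close>

definition quiver :: "'a set \<Rightarrow> 'v set \<Rightarrow> ('a \<Rightarrow> 'v) \<Rightarrow> ('a \<Rightarrow> 'v) \<Rightarrow> bool" where
  "quiver A Lam src tgt \<longleftrightarrow> (\<forall>x\<in>A. src x \<in> Lam \<and> tgt x \<in> Lam)"

definition composable :: "'a set \<Rightarrow> ('a \<Rightarrow> 'v) \<Rightarrow> ('a \<Rightarrow> 'v) \<Rightarrow> 'a \<Rightarrow> 'a \<Rightarrow> bool" where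
  "composable A src tgt x y \<longleftrightarrow> x \<in> A \<and> y \<in> A \<and> tgt x = src y"

text \<open>The arrows with source lam, i.e. A(lam, Lam).\<close>
definition out_arrows :: "'a set \<Rightarrow> ('a \<Rightarrow> 'v) \<Rightarrow> 'v \<Rightarrow> 'a set" where
  "out_arrows A src lam = {x\<in>A. src x = lam}"

definition in_arrows :: "'a set \<Rightarrow> ('a \<Rightarrow> 'v) \<Rightarrow> 'v \<Rightarrow> 'a set" where
  "in_arrows A tgt lam = {x\<in>A. tgt x = lam}"

text \<open>Braid relation on composable triples x|y|z:
  (sigma x id)(id x sigma)(sigma x id) = (id x sigma)(sigma x id)(id x sigma).\<close>
definition sig12 :: "('a \<times> 'a \<Rightarrow> 'a \<times> 'a) \<Rightarrow> 'a \<times> 'a \<times> 'a \<Rightarrow> 'a \<times> 'a \<times> 'a" where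
  "sig12 sig = (\<lambda>(x,y,z). (fst (sig (x,y)), snd (sig (x,y)), z))"

definition sig23 :: "('a \<times> 'a \<Rightarrow> 'a \<times> 'a) \<Rightarrow> 'a \<times> 'a \<times> 'a \<Rightarrow> 'a \<times> 'a \<times> 'a" where
  "sig23 sig = (\<lambda>(x,y,z). (x, fst (sig (y,z)), snd (sig (y,z))))"

definition qYB_map ::
  "'a set \<Rightarrow> 'v set \<Rightarrow> ('a \<Rightarrow> 'v) \<Rightarrow> ('a \<Rightarrow> 'v) \<Rightarrow> ('a \<times> 'a \<Rightarrow> 'a \<times> 'a) \<Rightarrow> bool" where
  "qYB_map A Lam src tgt sig \<longleftrightarrow>
     quiver A Lam src tgt \<and>
     (\<forall>x y. composable A src tgt x y \<longrightarrow>
        composable A src tgt (fst (sig (x,y))) (snd (sig (x,y))) \<and>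
        src (fst (sig (x,y))) = src x \<and> tgt (snd (sig (x,y))) = tgt y) \<and>
     (\<forall>x y z. composable A src tgt x y \<and> composable A src tgt y z \<longrightarrow>
        sig12 sig (sig23 sig (sig12 sig (x,y,z))) = sig23 sig (sig12 sig (sig23 sig (x,y,z))))"

definition involutive ::
  "'a set \<Rightarrow> ('a \<Rightarrow> 'v) \<Rightarrow> ('a \<Rightarrow> 'v) \<Rightarrow> ('a \<times> 'a \<Rightarrow> 'a \<times> 'a) \<Rightarrow> bool" where
  "involutive A src tgt sig \<longleftrightarrow>
     (\<forall>x y. composable A src tgt x y \<longrightarrow> sig (sig (x,y)) = (x,y))"

definition nondegenerate ::
  "'a set \<Rightarrow> ('a \<Rightarrow> 'v) \<Rightarrow> ('a \<Rightarrow> 'v) \<Rightarrow> ('a \<times> 'a \<Rightarrow> 'a \<times> 'a) \<Rightarrow> bool" where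
  "nondegenerate A src tgt sig \<longleftrightarrow>
     (\<forall>x\<in>A. bij_betw (\<lambda>y. fst (sig (x,y))) (out_arrows A src (tgt x)) (out_arrows A src (src x))) \<and>
     (\<forall>y\<in>A. bij_betw (\<lambda>x. snd (sig (x,y))) (in_arrows A tgt (src y)) (in_arrows A tgt (tgt y)))"

text \<open>Paths: a path is a pair (lam, xs) of a starting vertex and a composable list of arrows
  starting at lam (the empty list gives the identity at lam).\<close>
fun is_path :: "'a set \<Rightarrow> 'v set \<Rightarrow> ('a \<Rightarrow> 'v) \<Rightarrow> ('a \<Rightarrow> 'v) \<Rightarrow> 'v \<Rightarrow> 'a list \<Rightarrow> bool" where
  "is_path A Lam src tgt lam [] \<longleftrightarrow> lam \<in> Lam"
| "is_path A Lam src tgt lam (x # xs) \<longleftrightarrow>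
     x \<in> A \<and> src x = lam \<and> lam \<in> Lam \<and> is_path A Lam src tgt (tgt x) xs"

definition paths :: "'a set \<Rightarrow> 'v set \<Rightarrow> ('a \<Rightarrow> 'v) \<Rightarrow> ('a \<Rightarrow> 'v) \<Rightarrow> ('v \<times> 'a list) set" where
  "paths A Lam src tgt = {(lam, xs). is_path A Lam src tgt lam xs}"

definition ystep ::
  "'a set \<Rightarrow> 'v set \<Rightarrow> ('a \<Rightarrow> 'v) \<Rightarrow> ('a \<Rightarrow> 'v) \<Rightarrow> ('a \<times> 'a \<Rightarrow> 'a \<times> 'a) \<Rightarrow> (('v \<times> 'a list) \<times> ('v \<times> 'a list)) set" where
  "ystep A Lam src tgt sig =
     {((lam, u @ [x, y] @ v), (lam, u @ [fst (sig (x,y)), snd (sig (x,y))] @ v)) | lam u x y v.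
        (lam, u @ [x, y] @ v) \<in> paths A Lam src tgt}"

definition ycong ::
  "'a set \<Rightarrow> 'v set \<Rightarrow> ('a \<Rightarrow> 'v) \<Rightarrow> ('a \<Rightarrow> 'v) \<Rightarrow> ('a \<times> 'a \<Rightarrow> 'a \<times> 'a) \<Rightarrow> (('v \<times> 'a list) \<times> ('v \<times> 'a list)) set" where
  "ycong A Lam src tgt sig = (ystep A Lam src tgt sig \<union> (ystep A Lam src tgt sig)\<inverse>)\<^sup>*"

definition struct_cat ::
  "'a set \<Rightarrow> 'v set \<Rightarrow> ('a \<Rightarrow> 'v) \<Rightarrow> ('a \<Rightarrow> 'v) \<Rightarrow> ('a \<times> 'a \<Rightarrow> 'a \<times> 'a) \<Rightarrow> ('v \<times> 'a list) set set" where
  "struct_cat A Lam src tgt sig = paths A Lam src tgt // ycong A Lam src tgt sig"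

definition gen_elem ::
  "'a set \<Rightarrow> 'v set \<Rightarrow> ('a \<Rightarrow> 'v) \<Rightarrow> ('a \<Rightarrow> 'v) \<Rightarrow> ('a \<times> 'a \<Rightarrow> 'a \<times> 'a) \<Rightarrow> 'a \<Rightarrow> ('v \<times> 'a list) set" where
  "gen_elem A Lam src tgt sig x = ycong A Lam src tgt sig `` {(src x, [x])}"

definition ldiv ::
  "('v \<times> 'a list) set \<Rightarrow> ('v \<times> 'a list) set \<Rightarrow> bool" where
  "ldiv a c \<longleftrightarrow> (\<exists>lam xs ys. (lam, xs) \<in> a \<and> (lam, xs @ ys) \<in> c)"

definition is_right_lcm ::
  "'a set \<Rightarrow> 'v set \<Rightarrow> ('a \<Rightarrow> 'v) \<Rightarrow> ('a \<Rightarrow> 'v) \<Rightarrow> ('a \<times> 'a \<Rightarrow> 'a \<times> 'a) \<Rightarrow>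
   ('v \<times> 'a list) set \<Rightarrow> ('v \<times> 'a list) set \<Rightarrow> ('v \<times> 'a list) set \<Rightarrow> bool" where
  "is_right_lcm A Lam src tgt sig a b c \<longleftrightarrow>
     c \<in> struct_cat A Lam src tgt sig \<and> ldiv a c \<and> ldiv b c \<and>
     (\<forall>d\<in>struct_cat A Lam src tgt sig. ldiv a d \<and> ldiv b d \<longrightarrow> ldiv c d)"

inductive_set lcm_closure ::
  "'a set \<Rightarrow> 'v set \<Rightarrow> ('a \<Rightarrow> 'v) \<Rightarrow> ('a \<Rightarrow> 'v) \<Rightarrow> ('a \<times> 'a \<Rightarrow> 'a \<times> 'a) \<Rightarrow> ('v \<times> 'a list) set set"
  for A Lam src tgt sig where
  gen: "x \<in> A \<Longrightarrow> gen_elem A Lam src tgt sig x \<in> lcm_closure A Lam src tgt sig"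
| lcm: "a \<in> lcm_closure A Lam src tgt sig \<Longrightarrow> b \<in> lcm_closure A Lam src tgt sig \<Longrightarrow>
        is_right_lcm A Lam src tgt sig a b c \<Longrightarrow> c \<in> lcm_closure A Lam src tgt sig"

end

theory Submission
  imports Defs
begin

text \<open>Left non-degeneracy lets an arrow \<open>z\<close> out of \<open>\<lambda>\<close> be pushed through any path \<open>w\<close> from
  \<open>\<lambda>\<close>: writing the first arrow \<open>y\<close> of \<open>w\<close> as \<open>z = y \<rightharpoonup> y'\<close>, the relation
  \<open>y|y' \<sim> z|(y \<leftharpoonup> y')\<close> reduces the claim to \<open>y'\<close> and the rest of \<open>w\<close>, so \<open>z\<close> left-divides
  \<open>w t\<close> for a suitable arrow \<open>t\<close>. Doing this for the at most \<open>n\<close> arrows out of \<open>\<lambda>\<close> in turn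
  gives a common right multiple \<open>\<Delta>\<^sub>\<lambda>\<close> of all of them of length at most \<open>n\<close>.
  Every generator \<open>x\<close> left-divides the \<open>\<Delta>\<close> at its source, and a right-lcm of two left
  divisors of \<open>\<Delta>\<^sub>\<lambda>\<close> divides \<open>\<Delta>\<^sub>\<lambda>\<close> again, so every element of \<open>E\<close> left-divides
  some \<open>\<Delta>\<^sub>\<lambda>\<close> and is therefore no longer than \<open>n\<close>. Non-degeneracy also provides paths of
  every length, so \<open>E\<close> misses the classes of length \<open>n + 1\<close>.\<close>

lemma is_path_start_in_Lam: "is_path A Lam src tgt l xs \<Longrightarrow> l \<in> Lam"
  by (cases xs) auto

lemma is_path_append:
  "is_path A Lam src tgt l (xs @ ys) \<longleftrightarrow>
   is_path A Lam src tgt l xs \<and> is_path A Lam src tgt (last (l # map tgt xs)) ys"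
  by (induction xs arbitrary: l) (auto dest: is_path_start_in_Lam)

locale quiver_relations =
  fixes A :: "'a set" and Lam :: "'v set" and src tgt :: "'a \<Rightarrow> 'v"
    and sig :: "'a \<times> 'a \<Rightarrow> 'a \<times> 'a"
begin

abbreviation path :: "'v \<Rightarrow> 'a list \<Rightarrow> bool" where
  "path \<equiv> is_path A Lam src tgt"

abbreviation cong :: "'v \<times> 'a list \<Rightarrow> 'v \<times> 'a list \<Rightarrow> bool" (infix "\<approx>" 50) where
  "p \<approx> q \<equiv> (p, q) \<in> ycong A Lam src tgt sig"

abbreviation eclass :: "'v \<Rightarrow> 'a list \<Rightarrow> ('v \<times> 'a list) set" where
  "eclass l xs \<equiv> ycong A Lam src tgt sig `` {(l, xs)}"

abbreviation SC :: "('v \<times> 'a list) set set" where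
  "SC \<equiv> struct_cat A Lam src tgt sig"

lemma ystep_iff:
  "(p, q) \<in> ystep A Lam src tgt sig \<longleftrightarrow>
   (\<exists>l u x y v. p = (l, u @ [x, y] @ v) \<and> q = (l, u @ [fst (sig (x, y)), snd (sig (x, y))] @ v)
      \<and> path l (u @ [x, y] @ v))"
  unfolding ystep_def paths_def by blast

lemma ystep_append:
  "(p, q) \<in> ystep A Lam src tgt sig \<Longrightarrow> path (fst p) (snd p @ s) \<Longrightarrow>
   ((fst p, snd p @ s), (fst q, snd q @ s)) \<in> ystep A Lam src tgt sig"
  unfolding ystep_iff by (metis append.assoc fst_conv snd_conv)

lemma ycong_refl: "p \<approx> p"
  unfolding ycong_def by simp

lemma ycong_sym: "p \<approx> q \<Longrightarrow> q \<approx> p"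
  using sym_rtrancl[OF sym_Un_converse] unfolding ycong_def by (rule symD)

lemma ycong_trans: "p \<approx> q \<Longrightarrow> q \<approx> r \<Longrightarrow> p \<approx> r"
  unfolding ycong_def by (rule rtrancl_trans)

lemma ycong_head:
  "path l (x # y # ys) \<Longrightarrow> (l, x # y # ys) \<approx> (l, fst (sig (x, y)) # snd (sig (x, y)) # ys)"
  unfolding ycong_def by (rule r_into_rtrancl) (auto simp: ystep_iff intro!: exI[of _ "[]"])

lemma ycong_invariant:
  assumes "p \<approx> q" and "\<And>a b. (a, b) \<in> ystep A Lam src tgt sig \<Longrightarrow> f a = f b"
  shows "f p = f q"
  using assms(1) unfolding ycong_def
  by (induction rule: rtrancl_induct) (auto dest: assms(2))

lemma ycong_fst: "p \<approx> q \<Longrightarrow> fst p = fst q"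
  by (erule ycong_invariant) (auto simp: ystep_iff)

lemma ycong_length: "p \<approx> q \<Longrightarrow> length (snd p) = length (snd q)"
  by (erule ycong_invariant) (auto simp: ystep_iff)

lemma ycong_map:
  assumes "p \<approx> q" and "P p"
    and P_step: "\<And>a b. (a, b) \<in> ystep A Lam src tgt sig \<Longrightarrow> P a \<longleftrightarrow> P b"
    and f_step: "\<And>a b. (a, b) \<in> ystep A Lam src tgt sig \<Longrightarrow> P a \<Longrightarrow>
      (f a, f b) \<in> ystep A Lam src tgt sig"
  shows "f p \<approx> f q"
proof -
  have "P q \<and> f p \<approx> f q"
    using assms(1) unfolding ycong_def
  proof (induction rule: rtrancl_induct)
    case base
    show ?case using \<open>P p\<close> by simp
  next
    case (step q r)
    then have "P r" and "(f q, f r) \<in> ystep A Lam src tgt sig \<union> (ystep A Lam src tgt sig)\<inverse>"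
      using P_step f_step by blast+
    with step.IH show ?case by (meson rtrancl_into_rtrancl)
  qed
  then show ?thesis ..
qed

lemma ystep_Cons:
  assumes "(p, q) \<in> ystep A Lam src tgt sig" and "fst p = tgt y" and "y \<in> A" and "src y \<in> Lam"
  shows "((src y, y # snd p), (src y, y # snd q)) \<in> ystep A Lam src tgt sig"
proof -
  obtain l u x z v where "p = (l, u @ [x, z] @ v)"
    and "q = (l, u @ [fst (sig (x, z)), snd (sig (x, z))] @ v)" and "path l (u @ [x, z] @ v)"
    using assms(1) unfolding ystep_iff by blast
  with assms(2-4) show ?thesis
    unfolding ystep_iff by (intro exI[of _ "src y"] exI[of _ "y # u"] exI[of _ x] exI[of _ z] exI[of _ v]) auto
qed

lemma ycong_Cons:
  assumes "(tgt y, xs) \<approx> (tgt y, ys)" and "y \<in> A" and "src y \<in> Lam"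
  shows "(src y, y # xs) \<approx> (src y, y # ys)"
proof -
  have "(src y, y # snd (tgt y, xs)) \<approx> (src y, y # snd (tgt y, ys))"
    by (rule ycong_map[where P = "\<lambda>a. fst a = tgt y" and f = "\<lambda>a. (src y, y # snd a)"])
      (use assms ystep_Cons in \<open>auto simp: ystep_iff\<close>)
  then show ?thesis by simp
qed

lemma struct_cat_elem_ycong:
  assumes "e \<in> SC" and "p \<in> e" and "q \<in> e"
  shows "p \<approx> q"
proof -
  obtain r where "e = ycong A Lam src tgt sig `` {r}"
    using assms(1) unfolding struct_cat_def by (rule quotientE)
  then have "r \<approx> p" and "r \<approx> q"
    using assms(2,3) by auto
  then show ?thesis
    using ycong_trans[OF ycong_sym] by blast
qed

lemma eclass_in_struct_cat: "path l xs \<Longrightarrow> eclass l xs \<in> SC"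
  unfolding struct_cat_def by (rule quotientI) (simp add: paths_def)

lemma ldiv_fst_length:
  assumes "a \<in> SC" and "c \<in> SC" and "ldiv a c" and "p \<in> a" and "q \<in> c"
  shows "fst p = fst q \<and> length (snd p) \<le> length (snd q)"
proof -
  obtain l xs ys where "(l, xs) \<in> a" and "(l, xs @ ys) \<in> c"
    using assms(3) unfolding ldiv_def by blast
  then have "p \<approx> (l, xs)" and "(l, xs @ ys) \<approx> q"
    using struct_cat_elem_ycong assms by blast+
  then have "fst p = l" "length (snd p) = length xs" "fst q = l" "length (snd q) = length xs + length ys"
    by (auto dest: ycong_fst ycong_length)
  then show ?thesis
    by simp
qed

end

locale quiver_YB = quiver_relations +
  assumes qYB: "qYB_map A Lam src tgt sig"
begin

lemma arrow_ends_in_Lam: "x \<in> A \<Longrightarrow> src x \<in> Lam \<and> tgt x \<in> Lam"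
  using qYB unfolding qYB_map_def quiver_def by blast

lemma sig_composable:
  assumes "composable A src tgt x y"
  shows "composable A src tgt (fst (sig (x, y))) (snd (sig (x, y)))"
    and "src (fst (sig (x, y))) = src x" and "tgt (snd (sig (x, y))) = tgt y"
  using qYB assms unfolding qYB_map_def by blast+

lemma ystep_path_append_iff:
  assumes "(p, q) \<in> ystep A Lam src tgt sig"
  shows "path (fst p) (snd p @ s) \<longleftrightarrow> path (fst q) (snd q @ s)"
proof -
  obtain l u x y v where p: "p = (l, u @ [x, y] @ v)"
    and q: "q = (l, u @ [fst (sig (x, y)), snd (sig (x, y))] @ v)"
    and path_p: "path l (u @ [x, y] @ v)"
    using assms by (auto simp: ystep_iff)
  let ?m = "last (l # map tgt u)"
  have xy: "composable A src tgt x y" and "src x = ?m"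
    using path_p by (auto simp: is_path_append composable_def)
  moreover have "tgt (fst (sig (x, y))) \<in> Lam" "tgt x \<in> Lam"
    using xy sig_composable(1) arrow_ends_in_Lam by (auto simp: composable_def)
  ultimately show ?thesis
    using p q sig_composable[OF xy] by (auto simp: is_path_append composable_def)
qed

lemma ycong_path_iff: "(l, xs) \<approx> (l', ys) \<Longrightarrow> path l xs \<longleftrightarrow> path l' ys"
  using ycong_invariant[where f = "\<lambda>a. path (fst a) (snd a)"] ystep_path_append_iff[of _ _ "[]"]
  by (metis append_Nil2 fst_conv snd_conv)

lemma ycong_append:
  assumes "(l, xs) \<approx> (l', ys)" and "path l (xs @ s)"
  shows "(l, xs @ s) \<approx> (l', ys @ s)"
proof -
  have "(fst (l, xs), snd (l, xs) @ s) \<approx> (fst (l', ys), snd (l', ys) @ s)"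
    by (rule ycong_map[where P = "\<lambda>a. path (fst a) (snd a @ s)" and f = "\<lambda>a. (fst a, snd a @ s)"])
      (use assms ystep_path_append_iff ystep_append in auto)
  then show ?thesis by simp
qed

lemma gen_elem_in_struct_cat:
  assumes "x \<in> A"
  shows "gen_elem A Lam src tgt sig x \<in> SC"
proof -
  have "path (src x) [x]"
    using assms arrow_ends_in_Lam by simp
  then show ?thesis
    unfolding gen_elem_def by (rule eclass_in_struct_cat)
qed

lemma lcm_closure_subset_struct_cat: "lcm_closure A Lam src tgt sig \<subseteq> SC"
proof
  fix e assume "e \<in> lcm_closure A Lam src tgt sig"
  then show "e \<in> SC"
    by induction (auto simp: gen_elem_in_struct_cat is_right_lcm_def)
qed

lemma lcm_closure_ldiv_common_right_multiple:
  assumes V_path: "\<And>l. l \<in> Lam \<Longrightarrow> path l (V l)"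
    and V_div: "\<And>l x. l \<in> Lam \<Longrightarrow> x \<in> out_arrows A src l \<Longrightarrow> \<exists>ys. (l, x # ys) \<approx> (l, V l)"
    and "e \<in> lcm_closure A Lam src tgt sig"
  shows "\<exists>l\<in>Lam. ldiv e (eclass l (V l))"
  using assms(3)
proof (induction rule: lcm_closure.induct)
  case (gen x)
  have l: "src x \<in> Lam"
    using arrow_ends_in_Lam gen by blast
  moreover have "x \<in> out_arrows A src (src x)"
    using gen by (simp add: out_arrows_def)
  ultimately obtain ys where "(src x, x # ys) \<approx> (src x, V (src x))"
    using V_div by blast
  from ycong_sym[OF this] have "(src x, [x] @ ys) \<in> eclass (src x) (V (src x))"
    by simp
  moreover have "(src x, [x]) \<in> gen_elem A Lam src tgt sig x"
    unfolding gen_elem_def using ycong_refl by simp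
  ultimately show ?case
    using l unfolding ldiv_def by blast
next
  case (lcm a b c)
  have D: "eclass l (V l) \<in> SC" "(l, V l) \<in> eclass l (V l)" if "l \<in> Lam" for l
    using eclass_in_struct_cat[OF V_path[OF that]] ycong_refl by auto
  have a: "a \<in> SC" and b: "b \<in> SC"
    using lcm.hyps(1,2) lcm_closure_subset_struct_cat by blast+
  have c: "c \<in> SC" "ldiv a c" "ldiv b c"
    and c_least: "\<And>d. d \<in> SC \<Longrightarrow> ldiv a d \<Longrightarrow> ldiv b d \<Longrightarrow> ldiv c d"
    using lcm.hyps(3) unfolding is_right_lcm_def by auto
  obtain l where l: "l \<in> Lam" "ldiv a (eclass l (V l))"
    using lcm.IH(1) by blast
  obtain l' where l': "l' \<in> Lam" "ldiv b (eclass l' (V l'))"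
    using lcm.IH(2) by blast
  \<comment> \<open>\<open>a\<close> and \<open>b\<close> start where \<open>c\<close> does, so they left-divide the same \<open>\<Delta>\<close>\<close>
  obtain m xs ys where "(m, xs) \<in> a" and m: "(m, xs @ ys) \<in> c"
    using c(2) unfolding ldiv_def by blast
  from ldiv_fst_length[OF a D(1)[OF l(1)] l(2) this(1) D(2)[OF l(1)]] have "m = l"
    by simp
  obtain m' zs ws where "(m', zs) \<in> b" and m': "(m', zs @ ws) \<in> c"
    using c(3) unfolding ldiv_def by blast
  from ldiv_fst_length[OF b D(1)[OF l'(1)] l'(2) this(1) D(2)[OF l'(1)]] have "m' = l'"
    by simp
  moreover have "m = m'"
    using ycong_fst[OF struct_cat_elem_ycong[OF c(1) m m']] by simp
  ultimately have "ldiv b (eclass l (V l))"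
    using l'(2) \<open>m = l\<close> by simp
  with l(2) have "ldiv c (eclass l (V l))"
    by (intro c_least D(1) l(1))
  then show ?case
    using l(1) by blast
qed

end

locale nondegenerate_quiver_YB = quiver_YB +
  assumes nondeg: "nondegenerate A src tgt sig"
begin

lemma left_action_surj:
  assumes "y \<in> A" and "z \<in> out_arrows A src (src y)"
  obtains y' where "y' \<in> out_arrows A src (tgt y)" and "z = fst (sig (y, y'))"
proof -
  have "bij_betw (\<lambda>y'. fst (sig (y, y'))) (out_arrows A src (tgt y)) (out_arrows A src (src y))"
    using nondeg assms(1) unfolding nondegenerate_def by blast
  with assms(2) show ?thesis
    using that by (auto dest: bij_betw_imp_surj_on)
qed

lemma out_arrows_tgt_nonempty:
  assumes "x \<in> A"
  shows "out_arrows A src (tgt x) \<noteq> {}"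
proof -
  have "x \<in> out_arrows A src (src x)"
    using assms by (simp add: out_arrows_def)
  with assms show ?thesis
    using left_action_surj by blast
qed

lemma exists_path_of_length:
  "l \<in> Lam \<Longrightarrow> out_arrows A src l \<noteq> {} \<Longrightarrow> \<exists>w. path l w \<and> length w = k"
proof (induction k arbitrary: l)
  case 0
  then show ?case by simp
next
  case (Suc k)
  then obtain x where x: "x \<in> A" "src x = l" by (auto simp: out_arrows_def)
  then obtain w where "path (tgt x) w" "length w = k"
    using Suc.IH arrow_ends_in_Lam out_arrows_tgt_nonempty by blast
  with x Suc.prems show ?case by (intro exI[of _ "x # w"]) auto
qed

lemma arrow_left_divides_some_snoc:
  "path l w \<Longrightarrow> z \<in> out_arrows A src l \<Longrightarrow>
   \<exists>t ys. path l (w @ [t]) \<and> (l, z # ys) \<approx> (l, w @ [t])"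
proof (induction w arbitrary: l z)
  case Nil
  then have "z \<in> A" "src z = l" "l \<in> Lam"
    by (simp_all add: out_arrows_def)
  then have "path l ([] @ [z])"
    using arrow_ends_in_Lam by simp
  moreover have "(l, [z]) \<approx> (l, [] @ [z])"
    unfolding append_Nil by (rule ycong_refl)
  ultimately show ?case
    by (intro exI conjI)
next
  case (Cons y w)
  then have y: "y \<in> A" "src y = l" "l \<in> Lam" and path_w: "path (tgt y) w" by auto
  obtain y' where y': "y' \<in> out_arrows A src (tgt y)" and z: "z = fst (sig (y, y'))"
    using left_action_surj[OF y(1)] Cons.prems(2) y(2) by blast
  obtain t ys where path_wt: "path (tgt y) (w @ [t])"
    and IH: "(tgt y, y' # ys) \<approx> (tgt y, w @ [t])"
    using Cons.IH[OF path_w y'] by blast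
  have "path l (y # y' # ys)"
    using ycong_path_iff[OF IH] path_wt y by simp
  then have "(l, z # snd (sig (y, y')) # ys) \<approx> (l, y # y' # ys)"
    unfolding z by (rule ycong_sym[OF ycong_head])
  moreover have "(l, y # y' # ys) \<approx> (l, (y # w) @ [t])"
    using ycong_Cons[OF IH] y by simp
  ultimately have "(l, z # snd (sig (y, y')) # ys) \<approx> (l, (y # w) @ [t])"
    by (rule ycong_trans)
  moreover have "path l ((y # w) @ [t])"
    using path_wt y by simp
  ultimately show ?case
    by (intro exI conjI)
qed

lemma exists_common_right_multiple:
  assumes "finite S" and "S \<subseteq> out_arrows A src l" and "l \<in> Lam"
  shows "\<exists>v. path l v \<and> length v \<le> card S \<and> (\<forall>x\<in>S. \<exists>ys. (l, x # ys) \<approx> (l, v))"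
  using assms(1,2)
proof (induction rule: finite_subset_induct)
  case empty
  then show ?case
    using assms(3) by (intro exI[of _ "[]"]) simp
next
  case (insert z S)
  then obtain v where v: "path l v" "length v \<le> card S"
    and v_div: "\<forall>x\<in>S. \<exists>ys. (l, x # ys) \<approx> (l, v)"
    by blast
  from arrow_left_divides_some_snoc[OF v(1) insert.hyps(2)]
  obtain t ys where vt: "path l (v @ [t])" and z: "(l, z # ys) \<approx> (l, v @ [t])"
    by blast
  have "\<exists>ys. (l, x # ys) \<approx> (l, v @ [t])" if "x \<in> S" for x
  proof -
    from v_div that obtain ys where "(l, x # ys) \<approx> (l, v)"
      by blast
    from ycong_sym[OF this] have "(l, v @ [t]) \<approx> (l, (x # ys) @ [t])"
      using vt by (rule ycong_append)
    from ycong_sym[OF this] have "(l, x # ys @ [t]) \<approx> (l, v @ [t])"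
      by simp
    then show ?thesis ..
  qed
  moreover have "length (v @ [t]) \<le> card (insert z S)"
    using v(2) insert.hyps(1,3) by simp
  ultimately show ?case
    using vt z by (intro exI[of _ "v @ [t]"]) blast
qed

lemma lcm_closure_length_le:
  assumes out_bound: "\<forall>l\<in>Lam. finite (out_arrows A src l) \<and> card (out_arrows A src l) \<le> n"
    and e: "e \<in> lcm_closure A Lam src tgt sig" and p: "p \<in> e"
  shows "length (snd p) \<le> n"
proof -
  have "\<forall>l\<in>Lam. \<exists>v. path l v \<and> length v \<le> n \<and> (\<forall>x\<in>out_arrows A src l. \<exists>ys. (l, x # ys) \<approx> (l, v))"
  proof
    fix l assume l: "l \<in> Lam"
    with out_bound have fin: "finite (out_arrows A src l)" and card: "card (out_arrows A src l) \<le> n"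
      by auto
    from exists_common_right_multiple[OF fin subset_refl l] obtain v where "path l v"
      and "length v \<le> card (out_arrows A src l)" and "\<forall>x\<in>out_arrows A src l. \<exists>ys. (l, x # ys) \<approx> (l, v)"
      by blast
    with card show "\<exists>v. path l v \<and> length v \<le> n \<and> (\<forall>x\<in>out_arrows A src l. \<exists>ys. (l, x # ys) \<approx> (l, v))"
      using le_trans by blast
  qed
  from bchoice[OF this] obtain V where V: "\<forall>l\<in>Lam. path l (V l) \<and> length (V l) \<le> n \<and>
      (\<forall>x\<in>out_arrows A src l. \<exists>ys. (l, x # ys) \<approx> (l, V l))"
    by blast
  then have V_path: "\<And>l. l \<in> Lam \<Longrightarrow> path l (V l)"
    and V_div: "\<And>l x. l \<in> Lam \<Longrightarrow> x \<in> out_arrows A src l \<Longrightarrow> \<exists>ys. (l, x # ys) \<approx> (l, V l)"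
    by blast+
  from lcm_closure_ldiv_common_right_multiple[OF V_path V_div e]
  obtain l where l: "l \<in> Lam" and e_ldiv: "ldiv e (eclass l (V l))"
    by blast
  have "e \<in> SC"
    using e lcm_closure_subset_struct_cat by blast
  moreover have "(l, V l) \<in> eclass l (V l)"
    using ycong_refl by simp
  ultimately have "fst p = fst (l, V l) \<and> length (snd p) \<le> length (snd (l, V l))"
    by (rule ldiv_fst_length[OF _ eclass_in_struct_cat[OF V_path[OF l]] e_ldiv p])
  then have "length (snd p) \<le> length (V l)"
    by simp
  moreover have "length (V l) \<le> n"
    using V l by blast
  ultimately show ?thesis
    by (rule le_trans)
qed

end

theorem corollary5p13:
  fixes A :: "'a set" and Lam :: "'v set" and src tgt :: "'a \<Rightarrow> 'v"
    and sig :: "'a \<times> 'a \<Rightarrow> 'a \<times> 'a" and n :: nat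
  assumes "qYB_map A Lam src tgt sig"
    and "involutive A src tgt sig"
    and "nondegenerate A src tgt sig"
    and "A \<noteq> {}"
    and "\<forall>lam\<in>Lam. finite (out_arrows A src lam) \<and> card (out_arrows A src lam) \<le> n"
  shows "(\<forall>e\<in>lcm_closure A Lam src tgt sig. \<forall>p\<in>e. length (snd p) \<le> n)
         \<and> lcm_closure A Lam src tgt sig \<subset> struct_cat A Lam src tgt sig"
proof -
  interpret nondegenerate_quiver_YB A Lam src tgt sig
    using assms(1,3) by unfold_locales
  have bound: "\<forall>e\<in>lcm_closure A Lam src tgt sig. \<forall>p\<in>e. length (snd p) \<le> n"
    using lcm_closure_length_le[OF assms(5)] by blast
  obtain x where x: "x \<in> A"
    using assms(4) by blast
  then have "src x \<in> Lam" and "out_arrows A src (src x) \<noteq> {}"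
    using arrow_ends_in_Lam by (auto simp: out_arrows_def)
  then obtain w where w: "path (src x) w" "length w = Suc n"
    using exists_path_of_length by blast
  have "eclass (src x) w \<in> SC"
    using w(1) by (rule eclass_in_struct_cat)
  moreover have "eclass (src x) w \<notin> lcm_closure A Lam src tgt sig"
  proof
    assume "eclass (src x) w \<in> lcm_closure A Lam src tgt sig"
    moreover have "(src x, w) \<in> eclass (src x) w"
      using ycong_refl by simp
    ultimately have "length (snd (src x, w)) \<le> n"
      using bound by blast
    with w(2) show False
      by simp
  qed
  ultimately show ?thesis
    using bound lcm_closure_subset_struct_cat by blast
qed

end
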